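(* Consider the $q$-composite random key predistribution scheme on $n$ sensors with key pool size $P_n$ and key ring size $K_n$, where $q$ is a fixed positive integer and $q\le K_n\le P_n$. Suppose an adversary captures a uniformly random set of $m=m(n)$ sensors and learns all keys in their key rings, and let $p_{\textnormal{compromised}}$ denote the probability that the secure link between two non-captured sensors is compromised, conditioned on these two sensors sharing at least $q$ keys. If $\frac{P_n}{K_n}=\Omega(n)$, then $p_{\textnormal{compromised}}=o(1)$ whenever $m=o(n)$.
   Context: In the $q$-composite scheme, each sensor independently receives $K_n$ distinct keys chosen uniformly at random among all $K_n$-subsets of a pool of $P_n$ keys; two sensors have a secure link iff their key rings share at least $q$ keys. The secure link between two non-captured sensors is compromised iff every key shared by their key rings belongs to the key ring of at least one captured sensor. Asymptotics are as $n\to\infty$; $x_n=\Omega(y_n)$ means $x_n\ge c\,y_n$ for some constant $c>0$ and all large $n$; $x_n=o(y_n)$ means $x_n/y_n\to 0$. *)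

theory Defs
  imports Complex_Main "HOL-Library.FuncSet" "HOL-Library.Landau_Symbols"
begin

definition key_rings :: "nat \<Rightarrow> nat \<Rightarrow> nat set set" where
  "key_rings P K = {S. S \<subseteq> {..<P} \<and> card S = K}"

text \<open>The uniform distribution on this finite product set is the product of the uniform laws.\<close>
definition qc_space :: "nat \<Rightarrow> nat \<Rightarrow> nat \<Rightarrow> nat \<Rightarrow> ((nat \<Rightarrow> nat set) \<times> nat set) set" where
  "qc_space n P K m =
     {(R, M). R \<in> ({..<n} \<rightarrow>\<^sub>E key_rings P K) \<and> M \<subseteq> {..<n} \<and> card M = m}"

definition secure_link :: "nat \<Rightarrow> (nat \<Rightarrow> nat set) \<Rightarrow> nat \<Rightarrow> nat \<Rightarrow> bool" where
  "secure_link q R i j \<longleftrightarrow> q \<le> card (R i \<inter> R j)"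

definition link_compromised :: "(nat \<Rightarrow> nat set) \<Rightarrow> nat set \<Rightarrow> nat \<Rightarrow> nat \<Rightarrow> bool" where
  "link_compromised R M i j \<longleftrightarrow> R i \<inter> R j \<subseteq> (\<Union>c\<in>M. R c)"

text \<open>Probability that the link between two (by symmetry: sensors 0 and 1) non-captured
  sensors is compromised, conditioned on them being non-captured and sharing \<ge> q keys.\<close>
definition p_compromised :: "nat \<Rightarrow> nat \<Rightarrow> nat \<Rightarrow> nat \<Rightarrow> nat \<Rightarrow> real" where
  "p_compromised n P K q m =
     real (card {(R, M) \<in> qc_space n P K m. 0 \<notin> M \<and> 1 \<notin> M \<and> secure_link q R 0 1
                                            \<and> link_compromised R M 0 1})
   / real (card {(R, M) \<in> qc_space n P K m. 0 \<notin> M \<and> 1 \<notin> M \<and> secure_link q R 0 1})"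

end

theory Submission
  imports Defs
begin

text \<open>If the link between the uncaptured sensors 0 and 1 is compromised, the least key they share
  lies in the ring of some captured sensor c. Conditioned on everything except the ring of c, that
  ring is still a uniform K-subset of the pool, so it contains a fixed key with probability K/P.
  A union bound over the m captured sensors gives p_compromised \<le> m K / P = m / (P/K), which
  tends to 0 when m = o(n) and P/K = \<Omega>(n).\<close>

lemma card_filter_mult_eq_by_fibres:
  assumes "finite X"
    and "\<And>y. y \<in> f ` X \<Longrightarrow> card {x \<in> X. f x = y \<and> Q x} * d = a * card {x \<in> X. f x = y}"
  shows "card {x \<in> X. Q x} * d = a * card X"
proof -
  have card_fibres: "card Y = (\<Sum>y\<in>f ` X. card {x \<in> Y. f x = y})" if "Y \<subseteq> X" for Y
    using sum.group[of Y "f ` X" f "\<lambda>_. 1::nat"] that assms(1)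
    by (simp add: finite_subset image_mono)
  have "card {x \<in> X. Q x} * d = (\<Sum>y\<in>f ` X. card {x \<in> X. f x = y \<and> Q x} * d)"
    by (subst card_fibres)
      (auto simp: sum_distrib_right conj_commute intro!: sum.cong arg_cong[where f = card])
  also have "\<dots> = (\<Sum>y\<in>f ` X. a * card {x \<in> X. f x = y})"
    using assms(2) by (rule sum.cong[OF refl])
  also have "\<dots> = a * card X"
    by (simp add: card_fibres[of X] sum_distrib_left)
  finally show ?thesis .
qed

lemma card_filter_resample_coordinate:
  fixes X :: "(('i \<Rightarrow> 'a) \<times> 'b) set"
  assumes "finite X"
    and resample: "\<And>R M s. (R, M) \<in> X \<Longrightarrow> (R(c := s), M) \<in> X \<longleftrightarrow> s \<in> F"
    and Q_indep: "\<And>R M s. (R, M) \<in> X \<Longrightarrow> Q (R(c := s)) = Q R"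
    and fraction: "\<And>R M. (R, M) \<in> X \<Longrightarrow> card {s \<in> F. Q R s} * d = a * card F"
  shows "card {(R, M) \<in> X. Q R (R c)} * d = a * card X"
proof -
  define forget where "forget = (\<lambda>(R :: 'i \<Rightarrow> 'a, M :: 'b). (R(c := undefined), M))"
  have fibre: "{x \<in> X. forget x = forget (R, M)} = (\<lambda>s. (R(c := s), M)) ` F"
    if "(R, M) \<in> X" for R M
  proof (intro equalityI subsetI)
    fix x assume x: "x \<in> {x \<in> X. forget x = forget (R, M)}"
    then obtain R' where x_eq: "x = (R', M)" and R': "R'(c := undefined) = R(c := undefined)"
      by (auto simp: forget_def split: prod.splits)
    have "R' = R(c := R' c)"
      using R' by (metis fun_upd_triv fun_upd_upd)
    moreover have "R' c \<in> F"
      using resample[of R' M "R' c"] x x_eq by simp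
    ultimately show "x \<in> (\<lambda>s. (R(c := s), M)) ` F"
      using x_eq by blast
  qed (use resample[OF that] in \<open>auto simp: forget_def\<close>)
  have inj: "inj_on (\<lambda>s. (R(c := s), M)) A" for R M A
    by (rule inj_onI) (metis fun_upd_same prod.inject)
  have "{(R, M) \<in> X. Q R (R c)} = {x \<in> X. case x of (R, M) \<Rightarrow> Q R (R c)}"
    by auto
  also have "card \<dots> * d = a * card X"
  proof (rule card_filter_mult_eq_by_fibres[OF assms(1), where f = forget])
    fix y assume "y \<in> forget ` X"
    then obtain R M where RM: "(R, M) \<in> X" and y: "y = forget (R, M)"
      by auto
    have "{x \<in> X. forget x = y \<and> (case x of (R, M) \<Rightarrow> Q R (R c))}
        = {x \<in> (\<lambda>s. (R(c := s), M)) ` F. case x of (R, M) \<Rightarrow> Q R (R c)}"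
      using fibre[OF RM] unfolding y by blast
    also have "\<dots> = (\<lambda>s. (R(c := s), M)) ` {s \<in> F. Q R s}"
      using Q_indep[OF RM] by auto
    finally show "card {x \<in> X. forget x = y \<and> (case x of (R, M) \<Rightarrow> Q R (R c))} * d
             = a * card {x \<in> X. forget x = y}"
      using fraction[OF RM] fibre[OF RM] by (simp add: y card_image[OF inj])
  qed
  finally show ?thesis .
qed

lemma fun_upd_in_PiE_iff:
  assumes "x \<in> S" "f \<in> S \<rightarrow>\<^sub>E A"
  shows "f(x := y) \<in> S \<rightarrow>\<^sub>E A \<longleftrightarrow> y \<in> A"
  using assms by (auto simp: PiE_iff extensional_def)

lemma finite_key_rings: "finite (key_rings P K)"
  unfolding key_rings_def by (rule finite_subset[of _ "Pow {..<P}"]) auto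

lemma card_key_rings: "card (key_rings P K) = P choose K"
  unfolding key_rings_def using n_subsets[of "{..<P}" K] by simp

lemma card_key_rings_containing:
  assumes "k < P"
  shows "card {S \<in> key_rings P K. k \<in> S} * P = K * card (key_rings P K)"
proof (cases K)
  case 0
  then show ?thesis
    by (auto simp: key_rings_def card_eq_0_iff dest: finite_subset[of _ "{..<P}"])
next
  case (Suc j)
  have "{S \<in> key_rings P K. k \<in> S} = insert k ` {T. T \<subseteq> {..<P} - {k} \<and> card T = j}"
  proof (intro equalityI subsetI)
    fix S assume S: "S \<in> {S \<in> key_rings P K. k \<in> S}"
    then have "finite S"
      by (auto simp: key_rings_def dest: finite_subset[of _ "{..<P}"])
    with S Suc have "S - {k} \<in> {T. T \<subseteq> {..<P} - {k} \<and> card T = j}"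
      by (auto simp: key_rings_def)
    moreover have "S = insert k (S - {k})"
      using S by auto
    ultimately show "S \<in> insert k ` {T. T \<subseteq> {..<P} - {k} \<and> card T = j}"
      by blast
  qed (use assms Suc in \<open>auto simp: key_rings_def card_insert_if finite_subset[of _ "{..<P} - {k}"]\<close>)
  moreover have "inj_on (insert k) {T. T \<subseteq> {..<P} - {k} \<and> card T = j}"
    by (rule inj_onI) (metis Diff_insert_absorb Diff_iff mem_Collect_eq singletonI subset_iff)
  ultimately have "card {S \<in> key_rings P K. k \<in> S} = (P - 1) choose j"
    using n_subsets[of "{..<P} - {k}" j] assms by (simp add: card_image)
  then show ?thesis
    using times_binomial_minus1_eq[of K P] Suc by (simp add: card_key_rings mult.commute)
qed

lemma finite_qc_space: "finite (qc_space n P K m)"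
proof (rule finite_subset)
  show "qc_space n P K m \<subseteq> ({..<n} \<rightarrow>\<^sub>E key_rings P K) \<times> Pow {..<n}"
    unfolding qc_space_def by auto
  show "finite (({..<n} \<rightarrow>\<^sub>E key_rings P K) \<times> Pow {..<n})"
    by (simp add: finite_key_rings finite_PiE)
qed

definition secure_uncaptured ::
    "nat \<Rightarrow> nat \<Rightarrow> nat \<Rightarrow> nat \<Rightarrow> nat \<Rightarrow> ((nat \<Rightarrow> nat set) \<times> nat set) set"
  where "secure_uncaptured n P K q m =
    {(R, M) \<in> qc_space n P K m. 0 \<notin> M \<and> 1 \<notin> M \<and> secure_link q R 0 1}"

lemma p_compromised_eq:
  "p_compromised n P K q m =
     real (card {(R, M) \<in> secure_uncaptured n P K q m. link_compromised R M 0 1})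
   / real (card (secure_uncaptured n P K q m))"
proof -
  have "{(R, M) \<in> qc_space n P K m.
          0 \<notin> M \<and> 1 \<notin> M \<and> secure_link q R 0 1 \<and> link_compromised R M 0 1}
      = {(R, M) \<in> secure_uncaptured n P K q m. link_compromised R M 0 1}"
    by (auto simp: secure_uncaptured_def)
  then show ?thesis
    by (simp add: p_compromised_def secure_uncaptured_def)
qed

definition min_shared_key :: "(nat \<Rightarrow> nat set) \<Rightarrow> nat"
  where "min_shared_key R = Min (R 0 \<inter> R 1)"

lemma min_shared_key_mem:
  assumes "1 \<le> q" "secure_link q R 0 1"
  shows "min_shared_key R \<in> R 0 \<inter> R 1"
proof -
  have "card (R 0 \<inter> R 1) \<noteq> 0"
    using assms by (simp add: secure_link_def)
  then show ?thesis
    unfolding min_shared_key_def by (intro Min_in) (auto simp: card_eq_0_iff)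
qed

lemma card_captured_holding_min_shared_key:
  assumes "1 \<le> q" "c < n" "c \<noteq> 0" "c \<noteq> 1"
  shows "card {(R, M) \<in> secure_uncaptured n P K q m. c \<in> M \<and> min_shared_key R \<in> R c} * P
       = K * card {(R, M) \<in> secure_uncaptured n P K q m. c \<in> M}"
proof -
  define X where "X = {(R, M) \<in> secure_uncaptured n P K q m. c \<in> M}"
  have "{(R, M) \<in> secure_uncaptured n P K q m. c \<in> M \<and> min_shared_key R \<in> R c}
      = {(R, M) \<in> X. min_shared_key R \<in> R c}"
    by (auto simp: X_def)
  also have "card \<dots> * P = K * card X"
  proof (rule card_filter_resample_coordinate)
    show "finite X"
      by (rule finite_subset[OF _ finite_qc_space]) (auto simp: X_def secure_uncaptured_def)
    show "(R(c := s), M) \<in> X \<longleftrightarrow> s \<in> key_rings P K" if "(R, M) \<in> X" for R M s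
      using that assms fun_upd_in_PiE_iff[of c "{..<n}" R "key_rings P K" s]
      by (auto simp: X_def secure_uncaptured_def qc_space_def secure_link_def)
    show "(\<lambda>S. min_shared_key (R(c := s)) \<in> S) = (\<lambda>S. min_shared_key R \<in> S)" for R s
      using assms by (simp add: min_shared_key_def)
    show "card {S \<in> key_rings P K. min_shared_key R \<in> S} * P = K * card (key_rings P K)"
      if "(R, M) \<in> X" for R M
    proof (rule card_key_rings_containing)
      have "R 0 \<in> key_rings P K" "secure_link q R 0 1"
        using that assms by (auto simp: X_def secure_uncaptured_def qc_space_def)
      then show "min_shared_key R < P"
        using min_shared_key_mem[OF assms(1)] by (auto simp: key_rings_def)
    qed
  qed
  finally show ?thesis
    by (simp add: X_def)
qed

lemma sum_card_filter_mem:
  assumes "finite A" "finite C"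
  shows "(\<Sum>c\<in>C. card {x \<in> A. c \<in> g x}) = (\<Sum>x\<in>A. card (g x \<inter> C))"
proof -
  have "(\<Sum>c\<in>C. card {x \<in> A. c \<in> g x}) = (\<Sum>c\<in>C. \<Sum>x\<in>A. if c \<in> g x then 1 else 0)"
    using assms(1) by (simp add: sum.If_cases Int_def conj_commute)
  also have "\<dots> = (\<Sum>x\<in>A. \<Sum>c\<in>C. if c \<in> g x then 1 else 0)"
    by (rule sum.swap)
  also have "\<dots> = (\<Sum>x\<in>A. card (g x \<inter> C))"
    using assms(2) by (simp add: sum.If_cases Int_def conj_commute)
  finally show ?thesis .
qed

lemma card_compromised_le:
  assumes "1 \<le> q"
  shows "card {(R, M) \<in> secure_uncaptured n P K q m. link_compromised R M 0 1} * P
       \<le> K * m * card (secure_uncaptured n P K q m)"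
proof -
  define E where "E = secure_uncaptured n P K q m"
  define C where "C = {..<n} - {0, 1}"
  define holds_key where "holds_key c = {(R, M) \<in> E. c \<in> M \<and> min_shared_key R \<in> R c}" for c
  have finite_E: "finite E"
    by (rule finite_subset[OF _ finite_qc_space]) (auto simp: E_def secure_uncaptured_def)
  have "{(R, M) \<in> E. link_compromised R M 0 1} \<subseteq> (\<Union>c\<in>C. holds_key c)"
  proof clarify
    fix R M assume RM: "(R, M) \<in> E" and "link_compromised R M 0 1"
    moreover have "min_shared_key R \<in> R 0 \<inter> R 1"
      using RM assms by (intro min_shared_key_mem) (auto simp: E_def secure_uncaptured_def)
    ultimately obtain c where "c \<in> M" "min_shared_key R \<in> R c"
      by (auto simp: link_compromised_def)
    moreover have "M \<subseteq> C"
      using RM by (auto simp: E_def secure_uncaptured_def qc_space_def C_def)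
    ultimately show "(R, M) \<in> (\<Union>c\<in>C. holds_key c)"
      using RM by (auto simp: holds_key_def)
  qed
  then have "card {(R, M) \<in> E. link_compromised R M 0 1} \<le> card (\<Union>c\<in>C. holds_key c)"
    by (intro card_mono) (auto simp: holds_key_def intro: rev_finite_subset[OF finite_E])
  also have "\<dots> \<le> (\<Sum>c\<in>C. card (holds_key c))"
    by (rule card_UN_le) (simp add: C_def)
  finally have "card {(R, M) \<in> E. link_compromised R M 0 1} * P
      \<le> (\<Sum>c\<in>C. card (holds_key c)) * P"
    by (rule mult_le_mono1)
  also have "\<dots> = (\<Sum>c\<in>C. card (holds_key c) * P)"
    by (rule sum_distrib_right)
  also have "\<dots> = (\<Sum>c\<in>C. K * card {x \<in> E. c \<in> snd x})"
  proof (rule sum.cong[OF refl])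
    fix c assume "c \<in> C"
    then have "card (holds_key c) * P = K * card {(R, M) \<in> E. c \<in> M}"
      unfolding holds_key_def E_def
      by (intro card_captured_holding_min_shared_key assms) (auto simp: C_def)
    moreover have "{(R, M) \<in> E. c \<in> M} = {x \<in> E. c \<in> snd x}"
      by auto
    ultimately show "card (holds_key c) * P = K * card {x \<in> E. c \<in> snd x}"
      by simp
  qed
  also have "\<dots> = K * (\<Sum>x\<in>E. card (snd x \<inter> C))"
    using finite_E by (simp add: sum_distrib_left[symmetric] sum_card_filter_mem C_def)
  also have "\<dots> = K * m * card E"
  proof -
    have "card (snd x \<inter> C) = m" if "x \<in> E" for x
      using that
      by (auto simp: E_def secure_uncaptured_def qc_space_def C_def intro!: arg_cong[where f = card])
    then show ?thesis
      by simp
  qed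
  finally show ?thesis
    by (simp add: E_def)
qed

lemma p_compromised_le:
  assumes "1 \<le> q" "0 < P"
  shows "p_compromised n P K q m \<le> real m * real K / real P"
proof (cases "card (secure_uncaptured n P K q m) = 0")
  case False
  have "real (card {(R, M) \<in> secure_uncaptured n P K q m. link_compromised R M 0 1}) * real P
      \<le> real K * real m * real (card (secure_uncaptured n P K q m))"
    unfolding of_nat_mult[symmetric] of_nat_le_iff by (rule card_compromised_le[OF assms(1)])
  with False assms(2) show ?thesis
    by (simp add: p_compromised_eq field_simps)
qed (simp add: p_compromised_eq)

lemma p_compromised_nonneg: "0 \<le> p_compromised n P K q m"
  by (simp add: p_compromised_def)

theorem corollary1:
  fixes q :: nat and P K m :: "nat \<Rightarrow> nat"
  assumes "q \<ge> 1"
    and "\<And>n. q \<le> K n \<and> K n \<le> P n"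
    and "(\<lambda>n. real (P n) / real (K n)) \<in> \<Omega>(\<lambda>n. real n)"
    and "(\<lambda>n. real (m n)) \<in> o(\<lambda>n. real n)"
  shows "(\<lambda>n. p_compromised n (P n) (K n) q (m n)) \<longlonglongrightarrow> 0"
proof (rule tendsto_sandwich[where f = "\<lambda>_. 0"])
  have "(\<lambda>n. real (m n)) \<in> o(\<lambda>n. real (P n) / real (K n))"
    using assms(4,3) by (rule smallo_bigomega_trans)
  then have "(\<lambda>n. real (m n) / (real (P n) / real (K n))) \<longlonglongrightarrow> 0"
    by (rule smalloD_tendsto)
  then show "(\<lambda>n. real (m n) * real (K n) / real (P n)) \<longlonglongrightarrow> 0"
    by simp
  show "\<forall>\<^sub>F n in sequentially.
          p_compromised n (P n) (K n) q (m n) \<le> real (m n) * real (K n) / real (P n)"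
  proof (intro always_eventually allI p_compromised_le[OF assms(1)])
    show "0 < P n" for n
      using assms(1) assms(2)[of n] by linarith
  qed
  show "\<forall>\<^sub>F n in sequentially. 0 \<le> p_compromised n (P n) (K n) q (m n)"
    by (simp add: p_compromised_nonneg)
  show "(\<lambda>n. 0 :: real) \<longlonglongrightarrow> 0"
    by simp
qed

end
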